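(* Let $P\subset\mathbb{N}$ and let $(X_P,\sigma)$ be the spacing shift generated by $P$. If $(X_P,\sigma)$ is weakly mixing, then there exists a dense Mycielski subset $S\subset X_P$ with $\sigma(S)\subset S$ which is Banach scrambled for $\sigma$.
   Context: $\Sigma=\{0,1\}^{\mathbb{Z}_+}$ with the product topology and shift $\sigma(x)_n=x_{n+1}$. For $P\subset\mathbb{N}$, $X_P$ is the set of $x\in\Sigma$ such that whenever $x_i=x_j=1$ we have $|i-j|\in P\cup\{0\}$; it is closed and $\sigma$-invariant. A system $(X,T)$ is weakly mixing if $(X\times X,T\times T)$ is topologically transitive. A set $F\subset\mathbb{Z}_+$ has Banach density one if for every $\lambda<1$ there is $N\ge1$ with $\#(F\cap I)\ge\lambda\,\#(I)$ for every interval of integers $I\subset\mathbb{Z}_+$ with $\#(I)\ge N$. A pair $(x,y)$ is Banach proximal if for every $\varepsilon>0$ the set $\{n: d(T^nx,T^ny)<\varepsilon\}$ has Banach density one; it is asymptotic if $d(T^nx,T^ny)\to0$. A subset with at least two points is Banach scrambled if every pair of distinct points in it is Banach proximal but not asymptotic. A Mycielski set is a countable union of Cantor sets. *)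

theory Defs
  imports "HOL-Analysis.Analysis"
begin

text \<open>The full shift Sigma = {0,1}^Z+ is represented as the set of sequences
  nat => real with values in {0,1}; as a subspace of the product space
  nat => real (HOL-Analysis Function_Metric) it carries exactly the product topology.\<close>

definition full_shift :: "(nat \<Rightarrow> real) set" where
  "full_shift = {x. \<forall>n. x n \<in> {0, 1}}"

definition shift :: "(nat \<Rightarrow> real) \<Rightarrow> (nat \<Rightarrow> real)" where
  "shift x = (\<lambda>n. x (Suc n))"

definition spacing_shift :: "nat set \<Rightarrow> (nat \<Rightarrow> real) set" where
  "spacing_shift P = {x \<in> full_shift. \<forall>i j. x i = 1 \<and> x j = 1 \<longrightarrow>
      (if i \<le> j then j - i else i - j) \<in> P \<union> {0}}"

definition top_transitive :: "'a::topological_space set \<Rightarrow> ('a \<Rightarrow> 'a) \<Rightarrow> bool" where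
  "top_transitive X T \<longleftrightarrow> (\<forall>U V. openin (top_of_set X) U \<and> openin (top_of_set X) V
      \<and> U \<noteq> {} \<and> V \<noteq> {} \<longrightarrow> (\<exists>n. U \<inter> ((T ^^ n) -` V) \<noteq> {}))"

definition weakly_mixing :: "'a::topological_space set \<Rightarrow> ('a \<Rightarrow> 'a) \<Rightarrow> bool" where
  "weakly_mixing X T \<longleftrightarrow> top_transitive (X \<times> X) (\<lambda>(x, y). (T x, T y))"

definition banach_density_one :: "nat set \<Rightarrow> bool" where
  "banach_density_one F \<longleftrightarrow> (\<forall>l::real. l < 1 \<longrightarrow> (\<exists>N\<ge>1. \<forall>a k. k \<ge> N \<longrightarrow>
      real (card (F \<inter> {a..<a + k})) \<ge> l * real (card {a..<a + k})))"

definition banach_proximal :: "('a::metric_space \<Rightarrow> 'a) \<Rightarrow> 'a \<Rightarrow> 'a \<Rightarrow> bool" where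
  "banach_proximal T x y \<longleftrightarrow>
     (\<forall>\<epsilon>>0. banach_density_one {n. dist ((T ^^ n) x) ((T ^^ n) y) < \<epsilon>})"

definition asymptotic :: "('a::metric_space \<Rightarrow> 'a) \<Rightarrow> 'a \<Rightarrow> 'a \<Rightarrow> bool" where
  "asymptotic T x y \<longleftrightarrow> ((\<lambda>n. dist ((T ^^ n) x) ((T ^^ n) y)) \<longlonglongrightarrow> 0)"

definition banach_scrambled :: "('a::metric_space \<Rightarrow> 'a) \<Rightarrow> 'a set \<Rightarrow> bool" where
  "banach_scrambled T S \<longleftrightarrow> (\<exists>x\<in>S. \<exists>y\<in>S. x \<noteq> y) \<and>
     (\<forall>x\<in>S. \<forall>y\<in>S. x \<noteq> y \<longrightarrow> banach_proximal T x y \<and> \<not> asymptotic T x y)"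

definition cantor_set :: "'a::topological_space set \<Rightarrow> bool" where
  "cantor_set C \<longleftrightarrow> C \<noteq> {} \<and> compact C \<and> (\<forall>x\<in>C. x islimpt C)
     \<and> (\<forall>x\<in>C. connected_component_set C x = {x})"

definition mycielski :: "'a::topological_space set \<Rightarrow> bool" where
  "mycielski S \<longleftrightarrow> (\<exists>\<C>. countable \<C> \<and> (\<forall>C\<in>\<C>. cantor_set C) \<and> S = \<Union>\<C>)"

end

theory Submission
  imports Defs
begin

text \<open>Weak mixing is used only through topological transitivity, which extends any finite
  spacing set by an arbitrarily distant point. Iterating this along a fast growing sequence \<open>r\<close>
  of return times gives, for every finite spacing set (a block), infinitely many slots
  \<open>r s\<close> where ones may be placed freely without leaving \<open>X\<^sub>P\<close>. Writing the bits of a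
  sequence \<open>b\<close>, each infinitely often, into the slots of block \<open>k\<close> and shifting \<open>j\<close> times maps
  the Cantor space onto a Cantor set; the union over all \<open>k, j\<close> is a shift-invariant dense
  Mycielski set. Its points have ones only on a block and on slots, a set of Banach density zero,
  so any two of them agree on a set of Banach density one and are Banach proximal; the repeated
  bits, and a marker one on every even-indexed slot, make distinct points differ infinitely often.\<close>

section \<open>The full shift\<close>

lemma dist_fun_ge_coordinate:
  fixes x y :: "'a::countable \<Rightarrow> 'b::metric_space"
  shows "(1/2)^(to_nat i) * min (dist (x i) (y i)) 1 \<le> dist x y"
proof -
  have "summable (\<lambda>n. (1/2::real)^n * min (dist (x (from_nat n)) (y (from_nat n))) 1)"
    by (rule summable_comparison_test'[of "\<lambda>n. (1/2::real)^n"]) (auto simp: summable_geometric_iff)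
  then have "(\<Sum>n\<in>{to_nat i}. (1/2)^n * min (dist (x (from_nat n)) (y (from_nat n))) 1) \<le> dist x y"
    unfolding dist_fun_def by (rule sum_le_suminf) auto
  then show ?thesis by simp
qed

lemma dist_fun_less_if_agree_initial:
  assumes "e > 0"
  obtains M where "\<And>x y :: nat \<Rightarrow> 'b::metric_space. (\<forall>i\<le>M. x i = y i) \<Longrightarrow> dist x y < e"
proof -
  obtain N where N: "(1/2::real)^N < e"
    using real_arch_pow_inv[OF assms, of "1/2"] by auto
  define M where "M = Max (from_nat ` {..N} :: nat set)"
  have "dist x y < e" if agree: "\<forall>i\<le>M. x i = y i" for x y :: "nat \<Rightarrow> 'b"
  proof -
    have "from_nat n \<le> M" if "n \<le> N" for n
      unfolding M_def using that by (intro Max_ge) auto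
    with agree have "{dist (x (from_nat n)) (y (from_nat n)) |n. n \<le> N} = {0}"
      by (auto; use le0 in blast)
    then have "dist x y \<le> (1/2)^N" using dist_fun_le_dist_first_terms[of x y N] by simp
    with N show ?thesis by simp
  qed
  with that show ?thesis by blast
qed

lemma full_shift_coordinate_eq_if_dist_less:
  assumes "x \<in> full_shift" "y \<in> full_shift" "dist x y < (1/2)^(to_nat i)"
  shows "x i = y i"
proof (rule ccontr)
  assume "x i \<noteq> y i"
  moreover have "x i \<in> {0,1}" "y i \<in> {0,1}" using assms(1,2) unfolding full_shift_def by auto
  ultimately have "dist (x i) (y i) = 1" by (auto simp: dist_real_def)
  with dist_fun_ge_coordinate[of i x y] assms(3) show False by simp
qed

lemma openin_full_shift_cylinder:
  assumes "X \<subseteq> full_shift" "w \<in> full_shift"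
  shows "openin (top_of_set X) {x\<in>X. \<forall>i\<le>M. x i = w i}"
proof -
  have "open {x :: nat \<Rightarrow> real. \<forall>i\<in>{..M}. x (id i) \<in> ball (w i) (1/2)}"
    by (rule product_topology_basis') auto
  moreover have "{x\<in>X. \<forall>i\<le>M. x i = w i} = X \<inter> {x. \<forall>i\<in>{..M}. x (id i) \<in> ball (w i) (1/2)}"
  proof safe
    fix x i assume "x \<in> X" "\<forall>i\<in>{..M}. x (id i) \<in> ball (w i) (1/2)" "i \<le> M"
    then have "dist (w i) (x i) < 1/2" by auto
    moreover have "x i \<in> {0,1}" "w i \<in> {0,1}" using assms \<open>x \<in> X\<close> unfolding full_shift_def by auto
    ultimately show "x i = w i" unfolding dist_real_def by auto
  qed auto
  ultimately show ?thesis by auto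
qed

lemma compact_full_shift: "compact full_shift"
proof -
  have "full_shift = PiE UNIV (\<lambda>_. {0::real,1})"
    unfolding full_shift_def by (auto simp: PiE_def extensional_def)
  moreover have "compactin (product_topology (\<lambda>_. euclidean) UNIV) (PiE UNIV (\<lambda>_::nat. {0::real,1}))"
    by (subst compactin_PiE) auto
  ultimately show ?thesis by (simp add: euclidean_product_topology compactin_euclidean_iff)
qed

lemma connected_component_full_shift:
  assumes "C \<subseteq> full_shift" "x \<in> C"
  shows "connected_component_set C x = {x}"
proof -
  have "y = x" if "y \<in> connected_component_set C x" for y
  proof (rule ccontr)
    assume "y \<noteq> x"
    then obtain i where i: "y i \<noteq> x i" by auto
    from that obtain T where T: "connected T" "T \<subseteq> C" "x \<in> T" "y \<in> T"
      unfolding connected_component_def by auto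
    let ?Ti = "(\<lambda>z. z i) ` T"
    have "connected ?Ti"
      by (rule connected_continuous_image[OF continuous_on_subset[OF continuous_on_product_coordinates] T(1)])
         simp
    moreover have "?Ti \<subseteq> {0,1}" using T assms unfolding full_shift_def by auto
    moreover have "x i \<in> ?Ti" "y i \<in> ?Ti" using T by auto
    moreover have "x i \<in> {0,1}" "y i \<in> {0,1}" using T assms unfolding full_shift_def by auto
    ultimately have "0 \<in> ?Ti" "1 \<in> ?Ti" "connected ?Ti" using i by auto
    then have "1/2 \<in> ?Ti" using connectedD_interval[of ?Ti 0 1 "1/2"] by simp
    with \<open>?Ti \<subseteq> {0,1}\<close> show False by auto
  qed
  then show ?thesis using assms connected_component_refl by fastforce
qed

lemma funpow_shift: "(shift ^^ j) x = (\<lambda>n. x (n + j))"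
  by (induction j arbitrary: x) (auto simp: shift_def)

lemma funpow_prod_map:
  fixes T :: "'a \<Rightarrow> 'a"
  shows "((\<lambda>(x, y). (T x, T y)) ^^ n) (x, y) = ((T ^^ n) x, (T ^^ n) y)"
  by (induction n) simp_all

lemma top_transitive_if_weakly_mixing:
  assumes "weakly_mixing X T"
  shows "top_transitive X T"
  unfolding top_transitive_def
proof (intro allI impI)
  fix U V assume "openin (top_of_set X) U \<and> openin (top_of_set X) V \<and> U \<noteq> {} \<and> V \<noteq> {}"
  then have "openin (top_of_set (X \<times> X)) (U \<times> U) \<and> openin (top_of_set (X \<times> X)) (V \<times> V)
      \<and> U \<times> U \<noteq> {} \<and> V \<times> V \<noteq> {}"
    by (auto intro: openin_Times)
  then have "\<exists>n. (U \<times> U) \<inter> ((\<lambda>(x, y). (T x, T y)) ^^ n) -` (V \<times> V) \<noteq> {}"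
    using assms[unfolded weakly_mixing_def top_transitive_def, rule_format, of "U \<times> U" "V \<times> V"]
    by simp
  then obtain n p where "p \<in> U \<times> U" "((\<lambda>(x, y). (T x, T y)) ^^ n) p \<in> V \<times> V"
    by (meson IntE ex_in_conv vimageE)
  moreover obtain x y where "p = (x, y)" by (cases p)
  ultimately have "x \<in> U" "(T ^^ n) x \<in> V" by (auto simp: funpow_prod_map)
  then show "\<exists>n. U \<inter> (T ^^ n) -` V \<noteq> {}" by blast
qed

section \<open>Spacing sets\<close>

definition spacing_set :: "nat set \<Rightarrow> nat set \<Rightarrow> bool" where
  "spacing_set P F \<longleftrightarrow> (\<forall>i\<in>F. \<forall>j\<in>F. i < j \<longrightarrow> j - i \<in> P)"

lemma spacing_set_subset: "spacing_set P F \<Longrightarrow> G \<subseteq> F \<Longrightarrow> spacing_set P G"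
  unfolding spacing_set_def by blast

lemma spacing_shift_iff:
  "x \<in> spacing_shift P \<longleftrightarrow> x \<in> full_shift \<and> spacing_set P {n. x n = 1}"
  unfolding spacing_shift_def spacing_set_def
  by (auto; metis diff_self_eq_0 le_simps(1) less_imp_le linorder_neqE_nat not_le)

lemma spacing_shift_subset_full_shift: "spacing_shift P \<subseteq> full_shift"
  using spacing_shift_iff by blast

lemma funpow_shift_in_spacing_shift:
  assumes "x \<in> spacing_shift P"
  shows "(shift ^^ j) x \<in> spacing_shift P"
proof -
  have "x \<in> full_shift" and ones: "spacing_set P {n. x n = 1}"
    using assms spacing_shift_iff by auto
  then have "(\<lambda>n. x (n + j)) \<in> full_shift" unfolding full_shift_def by auto
  moreover have "spacing_set P {n. x (n + j) = 1}"
    unfolding spacing_set_def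
  proof (intro ballI impI)
    fix a b assume "a \<in> {n. x (n + j) = 1}" "b \<in> {n. x (n + j) = 1}" "a < b"
    then show "b - a \<in> P"
      using ones[unfolded spacing_set_def, rule_format, of "a + j" "b + j"] by simp
  qed
  ultimately show ?thesis unfolding funpow_shift spacing_shift_iff by simp
qed

lemma indicator_in_full_shift: "indicator F \<in> full_shift"
  unfolding full_shift_def by (simp add: indicator_def)

lemma indicator_in_spacing_shift: "spacing_set P F \<Longrightarrow> indicator F \<in> spacing_shift P"
  by (simp add: spacing_shift_iff indicator_in_full_shift indicator_def)

text \<open>Transitivity lets a finite spacing set \<open>F\<close> be extended by an arbitrarily large point:
  an orbit passing from the cylinder of \<open>indicator F\<close> to the cylinder of \<open>indicator {M}\<close>
  has ones at \<open>F\<close> and at \<open>M + n\<close>.\<close>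

lemma spacing_set_extend:
  assumes tt: "top_transitive (spacing_shift P) shift" and "finite F" "spacing_set P F"
  obtains q where "q \<ge> N" "\<And>f. f \<in> F \<Longrightarrow> f < q \<and> q - f \<in> P"
proof -
  let ?X = "spacing_shift P"
  define M where "M = N + \<Sum>F + 1"
  have F_less_M: "f < M" if "f \<in> F" for f
    using member_le_sum[of f F id] that \<open>finite F\<close> unfolding M_def by auto
  define U where "U = {x\<in>?X. \<forall>i\<le>M. x i = indicator F i}"
  define V where "V = {x\<in>?X. \<forall>i\<le>M. x i = indicator {M} i}"
  have "openin (top_of_set ?X) U" "openin (top_of_set ?X) V"
    unfolding U_def V_def
    by (simp_all add: openin_full_shift_cylinder spacing_shift_subset_full_shift indicator_in_full_shift)
  moreover have "indicator F \<in> U" "indicator {M} \<in> V"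
    unfolding U_def V_def
    using indicator_in_spacing_shift[OF \<open>spacing_set P F\<close>]
      indicator_in_spacing_shift[of P "{M}"] by (auto simp: spacing_set_def)
  ultimately obtain x n where x: "x \<in> U" "(shift ^^ n) x \<in> V"
    using tt unfolding top_transitive_def by blast
  have "x \<in> ?X" using x unfolding U_def by auto
  then have ones: "spacing_set P {n. x n = 1}" by (simp add: spacing_shift_iff)
  have "x (M + n) = 1" using x(2) unfolding V_def funpow_shift by auto
  moreover have "x f = 1" if "f \<in> F" for f
    using x(1) F_less_M[OF that] that unfolding U_def by auto
  ultimately have "f < M + n \<and> M + n - f \<in> P" if "f \<in> F" for f
    using ones F_less_M[OF that] that unfolding spacing_set_def by auto
  moreover have "M + n \<ge> N" unfolding M_def by simp
  ultimately show ?thesis using that by blast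
qed

section \<open>Banach density\<close>

text \<open>Upper Banach density zero, stated without real arithmetic.\<close>

definition banach_density_zero :: "nat set \<Rightarrow> bool" where
  "banach_density_zero A \<longleftrightarrow> (\<forall>G>0. \<exists>B. \<forall>a L. G * card (A \<inter> {a..<a+L}) \<le> B + L)"

lemma banach_density_zero_subset:
  assumes "banach_density_zero A" "C \<subseteq> A"
  shows "banach_density_zero C"
  unfolding banach_density_zero_def
proof (intro allI impI)
  fix G :: nat assume "G > 0"
  then obtain B where B: "\<And>a L. G * card (A \<inter> {a..<a+L}) \<le> B + L"
    using assms(1) unfolding banach_density_zero_def by blast
  have "G * card (C \<inter> {a..<a+L}) \<le> G * card (A \<inter> {a..<a+L})" for a L
    using assms(2) by (intro mult_le_mono2 card_mono) auto
  with B show "\<exists>B. \<forall>a L. G * card (C \<inter> {a..<a+L}) \<le> B + L" by (meson order.trans)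
qed

lemma banach_density_zero_Un:
  assumes "banach_density_zero A" "banach_density_zero C"
  shows "banach_density_zero (A \<union> C)"
  unfolding banach_density_zero_def
proof (intro allI impI)
  fix G :: nat assume "G > 0"
  then obtain B1 B2 where B1: "\<And>a L. 2 * G * card (A \<inter> {a..<a+L}) \<le> B1 + L"
    and B2: "\<And>a L. 2 * G * card (C \<inter> {a..<a+L}) \<le> B2 + L"
    using assms unfolding banach_density_zero_def by (metis mult_pos_pos zero_less_numeral)
  have "G * card ((A \<union> C) \<inter> {a..<a+L}) \<le> B1 + B2 + L" for a L
  proof -
    have "card ((A \<union> C) \<inter> {a..<a+L}) \<le> card (A \<inter> {a..<a+L}) + card (C \<inter> {a..<a+L})"
      by (metis Int_Un_distrib2 card_Un_le)
    then have "2 * G * card ((A \<union> C) \<inter> {a..<a+L})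
        \<le> 2 * G * card (A \<inter> {a..<a+L}) + 2 * G * card (C \<inter> {a..<a+L})"
      by (metis add_mult_distrib2 mult_le_mono2)
    with B1[of a L] B2[of a L] show ?thesis by linarith
  qed
  then show "\<exists>B. \<forall>a L. G * card ((A \<union> C) \<inter> {a..<a+L}) \<le> B + L" by blast
qed

lemma banach_density_zero_finite: "finite A \<Longrightarrow> banach_density_zero A"
  unfolding banach_density_zero_def
  by (metis card_mono inf_le1 mult_le_mono2 trans_le_add1)

lemma card_window_preimage_add:
  fixes A :: "nat set"
  shows "card ({n. n + j \<in> A} \<inter> {a..<a+L}) \<le> card (A \<inter> {a+j..<a+j+L})"
  by (rule card_inj_on_le[of "\<lambda>n. n + j"]) (auto simp: inj_on_def)

lemma banach_density_zero_preimage_add: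
  assumes "banach_density_zero A"
  shows "banach_density_zero {n. n + j \<in> A}"
  unfolding banach_density_zero_def
proof (intro allI impI)
  fix G :: nat assume "G > 0"
  then obtain B where B: "\<And>a L. G * card (A \<inter> {a..<a+L}) \<le> B + L"
    using assms unfolding banach_density_zero_def by blast
  have "G * card ({n. n + j \<in> A} \<inter> {a..<a+L}) \<le> B + L" for a L
    using mult_le_mono2[OF card_window_preimage_add, of G j A a L] B[of "a + j" L] by linarith
  then show "\<exists>B. \<forall>a L. G * card ({n. n + j \<in> A} \<inter> {a..<a+L}) \<le> B + L" by blast
qed

lemma card_separated_window:
  fixes T :: "nat set"
  assumes "T \<subseteq> {a..<a+L}" and separated: "\<And>p q. p \<in> T \<Longrightarrow> q \<in> T \<Longrightarrow> p < q \<Longrightarrow> p + G \<le> q"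
  shows "G * card T \<le> L + G"
proof -
  have "finite T" using assms(1) finite_subset by blast
  have "disjoint_family_on (\<lambda>p. {p..<p+G}) T"
    unfolding disjoint_family_on_def
  proof (intro ballI impI)
    fix p q assume "p \<in> T" "q \<in> T" "p \<noteq> q"
    then have "p + G \<le> q \<or> q + G \<le> p" using separated nat_neq_iff by blast
    then show "{p..<p+G} \<inter> {q..<q+G} = {}" by auto
  qed
  then have "card (\<Union>p\<in>T. {p..<p+G}) = G * card T"
    using \<open>finite T\<close> by (simp add: card_UN_disjoint')
  moreover have "card (\<Union>p\<in>T. {p..<p+G}) \<le> card {a..<a+L+G}"
    using assms(1) by (intro card_mono) auto
  ultimately show ?thesis by simp
qed

lemma banach_density_zero_range_gap:
  fixes f :: "nat \<Rightarrow> nat"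
  assumes gap: "\<And>t s. t < s \<Longrightarrow> f t + s < f s"
  shows "banach_density_zero (range f)"
  unfolding banach_density_zero_def
proof (intro allI impI)
  fix G :: nat assume "G > 0"
  have "G * card (range f \<inter> {a..<a+L}) \<le> G * G + (L + G)" for a L
  proof -
    let ?W = "{a..<a+L}"
    have less_iff: "f t < f s \<longleftrightarrow> t < s" for t s
      using gap by (metis add_lessD1 linorder_neqE_nat order.asym)
    have far: "G * card (f ` {G..} \<inter> ?W) \<le> L + G"
    proof (rule card_separated_window)
      fix p q assume "p \<in> f ` {G..} \<inter> ?W" "q \<in> f ` {G..} \<inter> ?W" "p < q"
      then obtain t s where "p = f t" "q = f s" "G \<le> s" "t < s" using less_iff by auto
      then show "p + G \<le> q" using gap[of t s] by linarith
    qed auto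
    have "range f \<inter> ?W \<subseteq> f ` {..<G} \<union> (f ` {G..} \<inter> ?W)"
    proof
      fix y assume "y \<in> range f \<inter> ?W"
      then obtain x where "y = f x" "y \<in> ?W" by auto
      then show "y \<in> f ` {..<G} \<union> (f ` {G..} \<inter> ?W)" by (cases "x < G") auto
    qed
    then have "card (range f \<inter> ?W) \<le> card (f ` {..<G}) + card (f ` {G..} \<inter> ?W)"
      by (meson card_Un_le card_mono finite_Int finite_UnI finite_atLeastLessThan
          finite_imageI finite_lessThan order.trans)
    also have "\<dots> \<le> G + card (f ` {G..} \<inter> ?W)"
      using card_image_le[of "{..<G}" f] by simp
    finally have "G * card (range f \<inter> ?W) \<le> G * G + G * card (f ` {G..} \<inter> ?W)"
      by (metis add_mult_distrib2 mult_le_mono2)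
    with far show ?thesis by linarith
  qed
  then show "\<exists>B. \<forall>a L. G * card (range f \<inter> {a..<a+L}) \<le> B + L"
    by (metis add.commute add.left_commute)
qed

lemma banach_density_one_mono:
  assumes "banach_density_one F" "F \<subseteq> F'"
  shows "banach_density_one F'"
  unfolding banach_density_one_def
proof (intro allI impI)
  fix l :: real assume "l < 1"
  with assms(1) obtain N where "N \<ge> 1"
    and N: "\<And>a k. k \<ge> N \<Longrightarrow> real (card (F \<inter> {a..<a + k})) \<ge> l * real (card {a..<a + k})"
    unfolding banach_density_one_def by blast
  moreover have "card (F \<inter> {a..<a + k}) \<le> card (F' \<inter> {a..<a + k})" for a k
    using assms(2) by (intro card_mono) auto
  ultimately show "\<exists>N\<ge>1. \<forall>a k. k \<ge> N \<longrightarrow> real (card (F' \<inter> {a..<a + k})) \<ge> l * real (card {a..<a + k})"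
    by (meson of_nat_le_iff order.trans)
qed

lemma card_window_minus_avoiding:
  fixes A :: "nat set"
  shows "card ({a..<a+k} - {n. \<forall>i\<le>M. n + i \<notin> A}) \<le> (\<Sum>i\<le>M. card (A \<inter> {a+i..<a+i+k}))"
proof -
  have "card ({a..<a+k} - {n. \<forall>i\<le>M. n + i \<notin> A}) \<le> card (\<Union>i\<le>M. {n. n + i \<in> A} \<inter> {a..<a+k})"
    by (intro card_mono) auto
  also have "\<dots> \<le> (\<Sum>i\<le>M. card ({n. n + i \<in> A} \<inter> {a..<a+k}))"
    by (rule card_UN_le) simp
  also have "\<dots> \<le> (\<Sum>i\<le>M. card (A \<inter> {a+i..<a+i+k}))"
    by (intro sum_mono card_window_preimage_add)
  finally show ?thesis .
qed

lemma banach_density_one_avoiding: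
  assumes "banach_density_zero A"
  shows "banach_density_one {n. \<forall>i\<le>M. n + i \<notin> A}"
  unfolding banach_density_one_def
proof (intro allI impI)
  fix l :: real assume "l < 1"
  define Good where "Good = {n. \<forall>i\<le>M. n + i \<notin> A}"
  define G :: nat where "G = nat \<lceil>2 * (real M + 1) / (1 - l)\<rceil> + 1"
  have "G > 0" unfolding G_def by simp
  have "2 * (real M + 1) / (1 - l) \<le> real G" unfolding G_def by linarith
  then have G_large: "2 * (real M + 1) \<le> real G * (1 - l)" using \<open>l < 1\<close> by (simp add: field_simps)
  obtain B where B: "\<And>a L. G * card (A \<inter> {a..<a+L}) \<le> B + L"
    using assms \<open>G > 0\<close> unfolding banach_density_zero_def by blast
  have "l * real (card {a..<a + k}) \<le> real (card (Good \<inter> {a..<a + k}))" if "k \<ge> B + 1" for a k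
  proof -
    let ?W = "{a..<a+k}"
    have "G * card (?W - Good) \<le> G * (\<Sum>i\<le>M. card (A \<inter> {a+i..<a+i+k}))"
      unfolding Good_def by (intro mult_le_mono2 card_window_minus_avoiding)
    also have "\<dots> = (\<Sum>i\<le>M. G * card (A \<inter> {a+i..<a+i+k}))"
      by (rule sum_distrib_left)
    also have "\<dots> \<le> (\<Sum>i\<le>M. B + k)"
      by (intro sum_mono B)
    also have "\<dots> = (M + 1) * (B + k)" by simp
    also have "\<dots> \<le> (M + 1) * (2 * k)" using that by (intro mult_le_mono2) linarith
    finally have "real (G * card (?W - Good)) \<le> real ((M + 1) * (2 * k))"
      by (rule of_nat_mono)
    then have "real G * card (?W - Good) \<le> (real M + 1) * (2 * k)" by (simp add: algebra_simps)
    also have "\<dots> \<le> real G * ((1 - l) * k)"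
      using mult_right_mono[OF G_large, of k] by (simp add: algebra_simps)
    finally have "card (?W - Good) \<le> (1 - l) * k" using \<open>G > 0\<close> by simp
    moreover have "card ?W = card (?W \<inter> Good) + card (?W - Good)"
      by (rule card_Int_Diff) simp
    ultimately show ?thesis by (simp add: algebra_simps Int_commute)
  qed
  then show "\<exists>N\<ge>1. \<forall>a k. k \<ge> N \<longrightarrow>
      real (card ({n. \<forall>i\<le>M. n + i \<notin> A} \<inter> {a..<a + k})) \<ge> l * real (card {a..<a + k})"
    unfolding Good_def by (intro exI[of _ "B + 1"]) auto
qed

lemma banach_proximal_if_density_zero:
  assumes "x \<in> full_shift" "y \<in> full_shift"
    and "banach_density_zero {n. x n = 1}" "banach_density_zero {n. y n = 1}"
  shows "banach_proximal shift x y"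
  unfolding banach_proximal_def
proof (intro allI impI)
  fix e :: real assume "e > 0"
  then obtain M where M: "\<And>x y :: nat \<Rightarrow> real. (\<forall>i\<le>M. x i = y i) \<Longrightarrow> dist x y < e"
    using dist_fun_less_if_agree_initial by blast
  define A where "A = {n. x n = 1} \<union> {n. y n = 1}"
  have "{n. \<forall>i\<le>M. n + i \<notin> A} \<subseteq> {n. dist ((shift ^^ n) x) ((shift ^^ n) y) < e}"
  proof
    fix n assume n: "n \<in> {n. \<forall>i\<le>M. n + i \<notin> A}"
    have "x (i + n) = y (i + n)" if "i \<le> M" for i
    proof -
      have "x (i + n) \<noteq> 1" "y (i + n) \<noteq> 1" using n that unfolding A_def by (auto simp: add.commute)
      moreover have "x (i + n) \<in> {0, 1}" "y (i + n) \<in> {0, 1}"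
        using assms(1,2) unfolding full_shift_def by auto
      ultimately show ?thesis by auto
    qed
    then show "n \<in> {n. dist ((shift ^^ n) x) ((shift ^^ n) y) < e}"
      using M by (simp add: funpow_shift)
  qed
  moreover have "banach_density_zero A"
    unfolding A_def using assms(3,4) by (rule banach_density_zero_Un)
  ultimately show "banach_density_one {n. dist ((shift ^^ n) x) ((shift ^^ n) y) < e}"
    using banach_density_one_avoiding banach_density_one_mono by blast
qed

lemma not_asymptotic_if_frequently_differ:
  assumes "x \<in> full_shift" "y \<in> full_shift" and differ: "\<And>N. \<exists>n\<ge>N. x n \<noteq> y n"
  shows "\<not> asymptotic shift x y"
proof
  assume "asymptotic shift x y"
  then obtain N where N: "\<And>n. n \<ge> N \<Longrightarrow> dist ((shift ^^ n) x) ((shift ^^ n) y) < (1/2)^(to_nat (0::nat))"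
    unfolding asymptotic_def using LIMSEQ_D[of _ 0 "(1/2)^(to_nat (0::nat))"] by fastforce
  obtain n where "n \<ge> N" "x n \<noteq> y n" using differ by blast
  have "(shift ^^ n) x \<in> full_shift" "(shift ^^ n) y \<in> full_shift"
    using assms(1,2) unfolding funpow_shift full_shift_def by auto
  with N[OF \<open>n \<ge> N\<close>] have "(shift ^^ n) x 0 = (shift ^^ n) y 0"
    by (rule full_shift_coordinate_eq_if_dist_less[rotated 2])
  with \<open>x n \<noteq> y n\<close> show False by (simp add: funpow_shift)
qed

section \<open>Blocks and return times\<close>

lemma sequence_strong_choice:
  assumes step: "\<And>s h. length h = s \<Longrightarrow> (\<And>t. t < s \<Longrightarrow> Q t (take t h) (h ! t)) \<Longrightarrow> \<exists>q. Q s h q"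
  obtains f :: "nat \<Rightarrow> 'a" where "\<And>s. Q s (map f [0..<s]) (f s)"
proof -
  define H where "H = rec_nat [] (\<lambda>s h. h @ [SOME q. Q s h q])"
  have H_simps: "H 0 = []" "H (Suc s) = H s @ [SOME q. Q s (H s) q]" for s
    unfolding H_def by simp_all
  define f where "f s = (SOME q. Q s (H s) q)" for s
  have H_eq: "H s = map f [0..<s]" for s
    by (induction s) (simp_all add: H_simps f_def)
  have "Q s (H s) (f s)" for s
  proof (induction s rule: less_induct)
    case (less s)
    have "\<exists>q. Q s (H s) q"
    proof (rule step)
      show "length (H s) = s" by (simp add: H_eq)
      show "Q t (take t (H s)) (H s ! t)" if "t < s" for t
        using less[OF that] that by (simp add: H_eq take_map)
    qed
    then show ?case unfolding f_def by (rule someI_ex)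
  qed
  then have "Q s (map f [0..<s]) (f s)" for s by (simp add: H_eq)
  with that show ?thesis by blast
qed

definition block :: "nat set \<Rightarrow> nat \<Rightarrow> nat set" where
  "block P k = (case from_nat k :: nat list \<times> nat of (L, m) \<Rightarrow>
     if spacing_set P (set L) \<and> set L \<subseteq> {..<m} then set L else {})"

definition block_bound :: "nat \<Rightarrow> nat" where
  "block_bound k = snd (from_nat k :: nat list \<times> nat)"

lemma spacing_set_block: "spacing_set P (block P k)"
  unfolding block_def by (auto split: prod.split simp: spacing_set_def)

lemma block_less_bound: "f \<in> block P k \<Longrightarrow> f < block_bound k"
  unfolding block_def block_bound_def by (auto split: prod.splits if_splits)

lemma finite_block: "finite (block P k)"
  unfolding block_def by (auto split: prod.split)

lemma block_surj:
  assumes "spacing_set P A" "A \<subseteq> {..<m}"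
  obtains k where "block P k = A" "block_bound k = m"
proof
  let ?k = "to_nat (sorted_list_of_set A, m)"
  have "finite A" using assms(2) finite_subset by blast
  then show "block P ?k = A" "block_bound ?k = m"
    using assms unfolding block_def block_bound_def by simp_all
qed

definition slot_block :: "nat \<Rightarrow> nat" where
  "slot_block s = fst (prod_decode s)"

definition slot_index :: "nat \<Rightarrow> nat" where
  "slot_index s = snd (prod_decode s)"

lemma slot_block_encode [simp]: "slot_block (prod_encode (k, i)) = k"
  and slot_index_encode [simp]: "slot_index (prod_encode (k, i)) = i"
  by (simp_all add: slot_block_def slot_index_def)

lemma slot_index_le: "slot_index s \<le> s"
  unfolding slot_index_def by (metis le_prod_encode_2 prod_decode_inverse prod.collapse)

lemma spacing_set_block_Un:
  fixes g :: "nat \<Rightarrow> nat"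
  assumes above: "\<And>t. t \<in> T \<Longrightarrow> block_bound k < g t"
    and to_block: "\<And>t f. t \<in> T \<Longrightarrow> f \<in> block P k \<Longrightarrow> g t - f \<in> P"
    and increasing: "\<And>t t'. t \<in> T \<Longrightarrow> t' \<in> T \<Longrightarrow> t' < t \<Longrightarrow> g t' < g t \<and> g t - g t' \<in> P"
  shows "spacing_set P (block P k \<union> g ` T)"
  unfolding spacing_set_def
proof (intro ballI impI)
  fix i j assume i: "i \<in> block P k \<union> g ` T" and j: "j \<in> block P k \<union> g ` T" and "i < j"
  show "j - i \<in> P"
  proof (cases "j \<in> block P k")
    case True
    with spacing_set_block[of P k] \<open>i < j\<close> show ?thesis
      using i block_less_bound[OF True] above unfolding spacing_set_def
      by (auto dest: order.strict_trans)
  next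
    case False
    then obtain t where t: "t \<in> T" "j = g t" using j by auto
    show ?thesis
    proof (cases "i \<in> block P k")
      case True then show ?thesis using to_block t by simp
    next
      case False
      then obtain t' where t': "t' \<in> T" "i = g t'" using i by auto
      have "t' < t"
      proof (rule ccontr)
        assume "\<not> t' < t"
        with t t' \<open>i < j\<close> have "t < t'" by (cases "t = t'") auto
        with increasing[OF t'(1) t(1)] t t' \<open>i < j\<close> show False by simp
      qed
      then show ?thesis using increasing t t' by blast
    qed
  qed
qed

text \<open>Position \<open>r s\<close> is a slot reserved for block \<open>slot_block s\<close>.\<close>

locale return_times =
  fixes P :: "nat set" and r :: "nat \<Rightarrow> nat"
  assumes gap: "t < s \<Longrightarrow> r t + s < r s"
    and above_block: "block_bound (slot_block s) < r s"
    and spacing_to_block: "f \<in> block P (slot_block s) \<Longrightarrow> r s - f \<in> P"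
    and spacing_to_slot: "t < s \<Longrightarrow> slot_block t = slot_block s \<Longrightarrow> r s - r t \<in> P"

lemma return_times_exist:
  assumes "top_transitive (spacing_shift P) shift"
  obtains r where "return_times P r"
proof -
  define Q where "Q s h q \<longleftrightarrow> (\<forall>t<s. h ! t + s < q) \<and> block_bound (slot_block s) < q
      \<and> (\<forall>f\<in>block P (slot_block s). q - f \<in> P)
      \<and> (\<forall>t<s. slot_block t = slot_block s \<longrightarrow> q - h ! t \<in> P)" for s h q
  have "\<exists>q. Q s h q" if "length h = s" and prefix: "\<And>t. t < s \<Longrightarrow> Q t (take t h) (h ! t)" for s h
  proof -
    define k where "k = slot_block s"
    define T where "T = {t. t < s \<and> slot_block t = k}"
    have "spacing_set P (block P k \<union> (!) h ` T)"
    proof (rule spacing_set_block_Un)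
      show "block_bound k < h ! t" if "t \<in> T" for t
        using prefix[of t] that unfolding Q_def T_def by auto
      show "h ! t - f \<in> P" if "t \<in> T" "f \<in> block P k" for t f
        using prefix[of t] that unfolding Q_def T_def by auto
      show "h ! t' < h ! t \<and> h ! t - h ! t' \<in> P" if "t \<in> T" "t' \<in> T" "t' < t" for t t'
        using prefix[of t] that unfolding Q_def T_def by auto
    qed
    moreover have "finite (block P k \<union> (!) h ` T)"
      unfolding T_def by (simp add: finite_block)
    ultimately obtain q where q: "q \<ge> sum_list h + s + block_bound k + 1"
      and spacing: "\<And>f. f \<in> block P k \<union> (!) h ` T \<Longrightarrow> f < q \<and> q - f \<in> P"
      using spacing_set_extend[OF assms] by metis
    have "h ! t \<le> sum_list h" if "t < s" for t
      using that \<open>length h = s\<close> by (simp add: elem_le_sum_list)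
    with q spacing show ?thesis
      unfolding Q_def k_def[symmetric] T_def by (intro exI[of _ q]) force
  qed
  then obtain r where r: "\<And>s. Q s (map r [0..<s]) (r s)"
    using sequence_strong_choice[of Q] by metis
  have "return_times P r"
    by unfold_locales (use r in \<open>auto simp: Q_def\<close>)
  with that show ?thesis .
qed

section \<open>Coded patterns\<close>

text \<open>Even indices carry \<open>1\<close>, marking the block; the odd index \<open>2 * prod_encode (t, u) + 1\<close>
  carries bit \<open>t\<close> of \<open>b\<close>, so every bit of \<open>b\<close> is written infinitely often.\<close>

definition coded_bit :: "(nat \<Rightarrow> real) \<Rightarrow> nat \<Rightarrow> real" where
  "coded_bit b i = (if even i then 1 else b (fst (prod_decode (i div 2))))"

lemma coded_bit_even: "coded_bit b (2 * u) = 1"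
  and coded_bit_odd: "coded_bit b (Suc (2 * prod_encode (t, u))) = b t"
  by (simp_all add: coded_bit_def)

lemma coded_bit_cong:
  assumes "\<And>t. t \<le> i \<Longrightarrow> b t = b' t"
  shows "coded_bit b i = coded_bit b' i"
proof -
  have "fst (prod_decode (i div 2)) \<le> i"
    by (metis le_prod_encode_1 prod_decode_inverse prod.collapse div_le_dividend order.trans)
  then show ?thesis using assms unfolding coded_bit_def by simp
qed

context return_times
begin

lemma return_less_iff: "r t < r s \<longleftrightarrow> t < s"
  using gap by (metis add_lessD1 linorder_neqE_nat order.asym)

lemma inj_return: "inj r"
  by (rule injI) (metis return_less_iff linorder_neqE_nat order.irrefl)

lemma less_return: "s < r s"
proof (cases s)
  case 0 then show ?thesis using above_block[of 0] by simp
next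
  case (Suc t) then show ?thesis using gap[of 0 s] by simp
qed

lemma block_less_return: "f \<in> block P (slot_block s) \<Longrightarrow> f < r s"
  using above_block block_less_bound order.strict_trans by blast

definition pattern :: "nat \<Rightarrow> (nat \<Rightarrow> real) \<Rightarrow> nat \<Rightarrow> real" where
  "pattern k b n = (if n \<in> block P k then 1
     else if n \<in> r ` {s. slot_block s = k} then coded_bit b (slot_index (inv r n)) else 0)"

lemma pattern_return: "slot_block s = k \<Longrightarrow> pattern k b (r s) = coded_bit b (slot_index s)"
  unfolding pattern_def using block_less_return inj_return by auto

lemma pattern_nonzero_cases:
  assumes "pattern k b n \<noteq> 0"
  shows "n \<in> block P k \<or> n \<in> r ` {s. slot_block s = k}"
  using assms unfolding pattern_def by (auto split: if_splits)

lemma pattern_ones_subset: "{n. pattern k b n = 1} \<subseteq> block P k \<union> r ` {s. slot_block s = k}"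
proof
  fix n assume "n \<in> {n. pattern k b n = 1}"
  then have "pattern k b n \<noteq> 0" by simp
  then show "n \<in> block P k \<union> r ` {s. slot_block s = k}" using pattern_nonzero_cases by blast
qed

lemma pattern_in_spacing_shift:
  assumes "b \<in> full_shift"
  shows "pattern k b \<in> spacing_shift P"
  unfolding spacing_shift_iff
proof
  show "pattern k b \<in> full_shift"
    using assms unfolding full_shift_def pattern_def coded_bit_def by auto
  have "spacing_set P (block P k \<union> r ` {s. slot_block s = k})"
    using above_block spacing_to_block spacing_to_slot return_less_iff
    by (intro spacing_set_block_Un) auto
  then show "spacing_set P {n. pattern k b n = 1}" using pattern_ones_subset by (rule spacing_set_subset)
qed

lemma banach_density_zero_pattern: "banach_density_zero {n. pattern k b n = 1}"
proof -
  have "{n. pattern k b n = 1} \<subseteq> block P k \<union> range r"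
    using pattern_ones_subset by blast
  moreover have "banach_density_zero (block P k \<union> range r)"
    using finite_block gap
    by (intro banach_density_zero_Un banach_density_zero_finite banach_density_zero_range_gap)
  ultimately show ?thesis by (rule banach_density_zero_subset[rotated])
qed

lemma continuous_on_pattern: "continuous_on full_shift (\<lambda>b. pattern k b n)"
  unfolding pattern_def coded_bit_def
  by (cases "n \<in> block P k"; cases "n \<in> r ` {s. slot_block s = k}"; cases "even (slot_index (inv r n))")
    (auto intro: continuous_on_subset[OF continuous_on_product_coordinates])

lemma pattern_cong:
  assumes "\<And>t. t < n \<Longrightarrow> b t = b' t"
  shows "pattern k b n = pattern k b' n"
proof (cases "n \<in> r ` {s. slot_block s = k}")
  case True
  then obtain s where "n = r s" by blast
  then have "coded_bit b (slot_index s) = coded_bit b' (slot_index s)"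
    using assms slot_index_le[of s] less_return[of s] by (intro coded_bit_cong) simp
  with \<open>n = r s\<close> inj_return show ?thesis unfolding pattern_def by simp
qed (simp add: pattern_def)

lemma pattern_reveals_bit:
  obtains s where "slot_block s = k" "N < r s" "\<And>b. pattern k b (r s) = b t"
proof
  let ?s = "prod_encode (k, Suc (2 * prod_encode (t, N)))"
  show "slot_block ?s = k" by simp
  show "pattern k b (r ?s) = b t" for b by (simp add: pattern_return coded_bit_odd)
  have "N \<le> prod_encode (t, N)" "Suc (2 * prod_encode (t, N)) \<le> ?s"
    by (rule le_prod_encode_2)+
  then show "N < r ?s" using less_return[of ?s] by linarith
qed

lemma pattern_marks_even_slot:
  obtains s where "slot_block s = k" "N \<le> s" "\<And>b. pattern k b (r s) = 1"
proof
  let ?s = "prod_encode (k, 2 * N)"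
  show "slot_block ?s = k" by simp
  show "pattern k b (r ?s) = 1" for b by (simp add: pattern_return coded_bit_even)
  show "N \<le> ?s" using le_prod_encode_2[of "2 * N" k] by linarith
qed

definition shifted_pattern :: "nat \<Rightarrow> nat \<Rightarrow> (nat \<Rightarrow> real) \<Rightarrow> nat \<Rightarrow> real" where
  "shifted_pattern k j b = (shift ^^ j) (pattern k b)"

lemma shifted_pattern_apply: "shifted_pattern k j b n = pattern k b (n + j)"
  by (simp add: shifted_pattern_def funpow_shift)

lemma shift_shifted_pattern: "shift (shifted_pattern k j b) = shifted_pattern k (Suc j) b"
  by (simp add: shifted_pattern_def)

lemma shifted_pattern_in_spacing_shift:
  "b \<in> full_shift \<Longrightarrow> shifted_pattern k j b \<in> spacing_shift P"
  unfolding shifted_pattern_def by (intro funpow_shift_in_spacing_shift pattern_in_spacing_shift)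

lemma banach_density_zero_shifted_pattern:
  "banach_density_zero {n. shifted_pattern k j b n = 1}"
proof -
  have "banach_density_zero {n. n + j \<in> {m. pattern k b m = 1}}"
    by (intro banach_density_zero_preimage_add banach_density_zero_pattern)
  then show ?thesis by (simp add: shifted_pattern_apply)
qed

lemma shifted_patterns_frequently_differ:
  assumes "shifted_pattern k j b \<noteq> shifted_pattern k' j' b'"
  shows "\<exists>n\<ge>N. shifted_pattern k j b n \<noteq> shifted_pattern k' j' b' n"
proof (cases "k = k' \<and> j = j'")
  case True
  with assms have "b \<noteq> b'" by auto
  then obtain t where "b t \<noteq> b' t" by auto
  obtain s where s: "slot_block s = k" "N + j < r s" "\<And>b. pattern k b (r s) = b t"
    using pattern_reveals_bit[where k = k and N = "N + j" and t = t] by blast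
  with True \<open>b t \<noteq> b' t\<close> show ?thesis
    by (intro exI[of _ "r s - j"]) (simp add: shifted_pattern_apply)
next
  case False
  obtain s where s: "slot_block s = k" "N + j + j' + block_bound k' + 1 \<le> s"
    and one: "pattern k b (r s) = 1"
    using pattern_marks_even_slot[where k = k and N = "N + j + j' + block_bound k' + 1"] by blast
  define n where "n = r s - j"
  have "r s = n + j" "N \<le> n" using less_return[of s] s(2) unfolding n_def by linarith+
  have "pattern k' b' (n + j') \<noteq> 1"
  proof
    assume "pattern k' b' (n + j') = 1"
    then consider "n + j' \<in> block P k'" | s' where "n + j' = r s'" "slot_block s' = k'"
      using pattern_ones_subset[of k' b'] by blast
    then show False
    proof cases
      case 1
      with block_less_bound \<open>r s = n + j\<close> less_return[of s] s(2) show False by fastforce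
    next
      case 2
      with s False \<open>r s = n + j\<close> have "s \<noteq> s'" by auto
      with gap[of s s'] gap[of s' s] 2(1) \<open>r s = n + j\<close> s(2) show False by linarith
    qed
  qed
  with one \<open>r s = n + j\<close> \<open>N \<le> n\<close> show ?thesis
    by (intro exI[of _ n]) (simp add: shifted_pattern_apply)
qed

lemma cantor_set_shifted_patterns: "cantor_set ((\<lambda>b. shifted_pattern k j b) ` full_shift)"
  unfolding cantor_set_def
proof (intro conjI ballI)
  let ?C = "(\<lambda>b. shifted_pattern k j b) ` full_shift"
  show "?C \<noteq> {}" unfolding full_shift_def by auto
  have "continuous_on full_shift (\<lambda>b. shifted_pattern k j b)"
    unfolding shifted_pattern_apply
    by (intro continuous_on_coordinatewise_then_product continuous_on_pattern)
  then show "compact ?C" using compact_full_shift by (rule compact_continuous_image)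
  fix x assume "x \<in> ?C"
  then obtain b where b: "b \<in> full_shift" "x = shifted_pattern k j b" by auto
  have "?C \<subseteq> full_shift"
    using shifted_pattern_in_spacing_shift spacing_shift_subset_full_shift by blast
  then show "connected_component_set ?C x = {x}"
    using \<open>x \<in> ?C\<close> by (rule connected_component_full_shift)
  show "x islimpt ?C"
    unfolding islimpt_approachable
  proof (intro allI impI)
    fix e :: real assume "e > 0"
    then obtain M where M: "\<And>x y :: nat \<Rightarrow> real. (\<forall>i\<le>M. x i = y i) \<Longrightarrow> dist x y < e"
      using dist_fun_less_if_agree_initial by blast
    obtain s where s: "slot_block s = k" "M + j < r s" "\<And>b. pattern k b (r s) = b (M + j + 1)"
      using pattern_reveals_bit[where k = k and N = "M + j" and t = "M + j + 1"] by blast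
    define b' where "b' = b(M + j + 1 := 1 - b (M + j + 1))"
    have "b' \<in> full_shift" using b(1) unfolding b'_def full_shift_def by auto
    moreover have "shifted_pattern k j b' i = shifted_pattern k j b i" if "i \<le> M" for i
      unfolding shifted_pattern_apply using that by (intro pattern_cong) (simp add: b'_def)
    moreover have "b (M + j + 1) \<in> {0, 1}" using b(1) unfolding full_shift_def by auto
    then have "shifted_pattern k j b' (r s - j) \<noteq> shifted_pattern k j b (r s - j)"
      using s by (auto simp: shifted_pattern_apply b'_def)
    ultimately show "\<exists>x'\<in>?C. x' \<noteq> x \<and> dist x' x < e"
      using M b(2) by (intro bexI[of _ "shifted_pattern k j b'"]) auto
  qed
qed

definition pattern_set :: "(nat \<Rightarrow> real) set" where
  "pattern_set = (\<Union>k j. (\<lambda>b. shifted_pattern k j b) ` full_shift)"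

lemma pattern_set_subset: "pattern_set \<subseteq> spacing_shift P"
  unfolding pattern_set_def using shifted_pattern_in_spacing_shift by blast

lemma shift_pattern_set: "shift ` pattern_set \<subseteq> pattern_set"
  unfolding pattern_set_def using shift_shifted_pattern by blast

lemma mycielski_pattern_set: "mycielski pattern_set"
  unfolding mycielski_def pattern_set_def
  by (intro exI[of _ "range (\<lambda>(k, j). (\<lambda>b. shifted_pattern k j b) ` full_shift)"])
    (auto simp: cantor_set_shifted_patterns)

lemma spacing_shift_subset_closure_pattern_set: "spacing_shift P \<subseteq> closure pattern_set"
proof
  fix z assume z: "z \<in> spacing_shift P"
  show "z \<in> closure pattern_set" unfolding closure_approachable
  proof (intro allI impI)
    fix e :: real assume "e > 0"
    then obtain M where M: "\<And>x y :: nat \<Rightarrow> real. (\<forall>i\<le>M. x i = y i) \<Longrightarrow> dist x y < e"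
      using dist_fun_less_if_agree_initial by blast
    define A where "A = {i. i \<le> M \<and> z i = 1}"
    have "spacing_set P A"
      using z unfolding spacing_shift_iff A_def by (auto intro: spacing_set_subset)
    then obtain k where k: "block P k = A" "block_bound k = Suc M"
      by (rule block_surj) (auto simp: A_def)
    define x where "x = shifted_pattern k 0 (\<lambda>_. 0)"
    have "x i = z i" if "i \<le> M" for i
    proof (cases "z i = 1")
      case True then show ?thesis using that by (simp add: x_def shifted_pattern_apply pattern_def k A_def)
    next
      case False
      with z have "z i = 0" unfolding spacing_shift_iff full_shift_def by auto
      moreover have "i \<noteq> r s" if "slot_block s = k" for s
        using above_block[of s] k(2) \<open>i \<le> M\<close> that by simp
      then have "i \<notin> r ` {s. slot_block s = k}" by blast
      ultimately show ?thesis using False by (simp add: x_def shifted_pattern_apply pattern_def k A_def)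
    qed
    then have "dist x z < e" using M by blast
    moreover have "x \<in> pattern_set"
      unfolding pattern_set_def x_def full_shift_def by auto
    ultimately show "\<exists>x\<in>pattern_set. dist x z < e" by blast
  qed
qed

lemma banach_scrambled_pattern_set: "banach_scrambled shift pattern_set"
  unfolding banach_scrambled_def
proof (intro conjI ballI impI)
  obtain s where s: "\<And>b. pattern 0 b (r s) = b 0"
    using pattern_reveals_bit[where k = 0 and t = 0] by blast
  have "(\<lambda>_. 0) \<in> full_shift" "(\<lambda>_. 1) \<in> full_shift" unfolding full_shift_def by auto
  then have "shifted_pattern 0 0 (\<lambda>_. 0) \<in> pattern_set" "shifted_pattern 0 0 (\<lambda>_. 1) \<in> pattern_set"
    unfolding pattern_set_def by blast+
  moreover have "shifted_pattern 0 0 (\<lambda>_. 0) (r s) \<noteq> shifted_pattern 0 0 (\<lambda>_. 1) (r s)"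
    using s by (simp add: shifted_pattern_apply)
  ultimately show "\<exists>x\<in>pattern_set. \<exists>y\<in>pattern_set. x \<noteq> y" by metis
next
  fix x y assume "x \<in> pattern_set" "y \<in> pattern_set" "x \<noteq> y"
  then obtain k j b k' j' b' where x: "x = shifted_pattern k j b" "b \<in> full_shift"
    and y: "y = shifted_pattern k' j' b'" "b' \<in> full_shift"
    unfolding pattern_set_def by blast
  have "x \<in> full_shift" "y \<in> full_shift"
    using x y shifted_pattern_in_spacing_shift spacing_shift_subset_full_shift by blast+
  show "banach_proximal shift x y"
    using \<open>x \<in> full_shift\<close> \<open>y \<in> full_shift\<close>
    by (rule banach_proximal_if_density_zero) (simp_all add: x y banach_density_zero_shifted_pattern)
  show "\<not> asymptotic shift x y"
    using \<open>x \<in> full_shift\<close> \<open>y \<in> full_shift\<close>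
  proof (rule not_asymptotic_if_frequently_differ)
    show "\<exists>n\<ge>N. x n \<noteq> y n" for N
      using shifted_patterns_frequently_differ \<open>x \<noteq> y\<close> unfolding x y by blast
  qed
qed

end

theorem mainTheorem5:
  fixes P :: "nat set"
  assumes "weakly_mixing (spacing_shift P) shift"
  shows "\<exists>S. S \<subseteq> spacing_shift P \<and> spacing_shift P \<subseteq> closure S \<and> mycielski S
           \<and> shift ` S \<subseteq> S \<and> banach_scrambled shift S"
proof -
  have "top_transitive (spacing_shift P) shift"
    using assms by (rule top_transitive_if_weakly_mixing)
  then obtain r where "return_times P r" by (rule return_times_exist)
  then interpret return_times P r .
  show ?thesis
    using pattern_set_subset spacing_shift_subset_closure_pattern_set mycielski_pattern_set
      shift_pattern_set banach_scrambled_pattern_set by blast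
qed

end
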